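(* Let $(X,d)$ be a metric space, let $x_0\in X$ and $r\ge 0$, and let $C_{x_0,r}=\{x\in X: d(x_0,x)=r\}$. Define $\varphi:X\to[0,\infty)$ by $\varphi(x)=d(x,x_0)$ for all $x\in X$. If there exist a self-mapping $T:X\to X$ and some $h\in[0,1)$ such that (C1)** $d(x,Tx)\le \varphi(x)-\varphi(Tx)$ and (C2)** $h\,d(x,Tx)+d(Tx,x_0)\ge r$ for each $x\in C_{x_0,r}$, then $C_{x_0,r}$ is a fixed circle of $T$, i.e. $Tx=x$ for every $x\in C_{x_0,r}$.
   Context: For a metric space $(X,d)$, the circle with center $x_0\in X$ and radius $r$ is $C_{x_0,r}=\{x\in X: d(x_0,x)=r\}$. For a self-mapping $T:X\to X$, the circle $C_{x_0,r}$ is called a fixed circle of $T$ if $Tx=x$ for every $x\in C_{x_0,r}$. *)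

theory Defs
  imports "HOL-Analysis.Analysis"
begin

definition circle :: "'a::metric_space \<Rightarrow> real \<Rightarrow> 'a set" where
  "circle x0 r = {x. dist x0 x = r}"

definition fixed_circle :: "('a::metric_space \<Rightarrow> 'a) \<Rightarrow> 'a \<Rightarrow> real \<Rightarrow> bool" where
  "fixed_circle T x0 r \<longleftrightarrow> (\<forall>x\<in>circle x0 r. T x = x)"

end

theory Submission
  imports Defs
begin

text \<open>On the circle, (C1) bounds d(x,Tx) above by r - d(Tx,x0) and (C2) bounds that same
quantity above by h d(x,Tx); since h < 1 this forces d(x,Tx) = 0.\<close>

lemma dist_le_scaled_self_imp_eq:
  fixes x y :: "'a::metric_space" and h :: real
  assumes "h < 1" and "dist x y \<le> h * dist x y"
  shows "x = y"
proof -
  have "(1 - h) * dist x y \<le> 0" using assms(2) by (simp add: algebra_simps)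
  with \<open>h < 1\<close> have "dist x y \<le> 0" by (simp add: mult_le_0_iff)
  then show ?thesis by simp
qed

lemma fixed_point_on_circle:
  fixes T :: "'a::metric_space \<Rightarrow> 'a" and x0 x :: 'a and r h :: real
  assumes "x \<in> circle x0 r" and "h < 1"
    and C1: "dist x (T x) \<le> dist x x0 - dist (T x) x0"
    and C2: "h * dist x (T x) + dist (T x) x0 \<ge> r"
  shows "T x = x"
proof -
  have "dist x x0 = r" using \<open>x \<in> circle x0 r\<close> by (simp add: circle_def dist_commute)
  with C1 C2 have "dist x (T x) \<le> h * dist x (T x)" by linarith
  with \<open>h < 1\<close> show ?thesis by (metis dist_le_scaled_self_imp_eq)
qed

theorem theorem2p15:
  fixes T :: "'a::metric_space \<Rightarrow> 'a" and x0 :: 'a and r h :: real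
    and \<phi> :: "'a \<Rightarrow> real"
  assumes "r \<ge> 0"
    and "\<And>x. \<phi> x = dist x x0"
    and "0 \<le> h" and "h < 1"
    and C1: "\<And>x. x \<in> circle x0 r \<Longrightarrow> dist x (T x) \<le> \<phi> x - \<phi> (T x)"
    and C2: "\<And>x. x \<in> circle x0 r \<Longrightarrow> h * dist x (T x) + dist (T x) x0 \<ge> r"
  shows "fixed_circle T x0 r"
  unfolding fixed_circle_def
proof
  fix x assume x: "x \<in> circle x0 r"
  show "T x = x"
    using fixed_point_on_circle[OF x \<open>h < 1\<close>] C1[OF x] C2[OF x] assms(2) by simp
qed

end
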